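(* For all $(\dot I_0,\dot d_0,\dot z_1,\dot z_2,\dot z_3)\in\mathbb C^5$ and $a,b,F\in\mathbb C$, the $\mathcal L$-module $M(\dot I_0,\dot d_0,\dot z_1,\dot z_2,\dot z_3)\otimes A'(a,b;F)$ is not simple.
   Context: $\mathcal{L}$ has basis $\{d_n,I_n,z_1,z_2,z_3\mid n\in\mathbb{Z}\}$ with brackets $[d_n,d_m]=(m-n)d_{m+n}+\delta_{n,-m}\frac{n^3-n}{12}z_1$, $[d_n,I_m]=mI_{m+n}+\delta_{n,-m}(n^2+n)z_2$, $[I_n,I_m]=n\delta_{n,-m}z_3$, $z_i$ central. $M(\dot I_0,\dot d_0,\dot z_1,\dot z_2,\dot z_3)=U(\mathcal L)/\mathcal I$ is the Verma module, where $\mathcal I$ is the left ideal generated by $d_n,I_n$ ($n\in\mathbb N$), $d_0-\dot d_0$, $I_0-\dot I_0$, $z_i-\dot z_i$ ($i=1,2,3$). For $a,b,F\in\mathbb C$, $A(a,b;F)=\mathbb{C}[x,x^{-1}]$ with $z_1=z_2=z_3=0$, $d_nx^m=(a+m+nb)x^{m+n}$, $I_nx^m=Fx^{m+n}$; it is simple unless $a\in\mathbb Z$, $b\in\{0,1\}$, $F=0$, and $A'(a,b;F)$ denotes its unique nontrivial simple subquotient. *)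

theory Defs
  imports Main "HOL.Complex"
begin

datatype Lb = LD int | LI int | LZ1 | LZ2 | LZ3

text \<open>brk x y z = coefficient of basis element z in [x,y].\<close>
fun brk :: "Lb \<Rightarrow> Lb \<Rightarrow> Lb \<Rightarrow> complex" where
  "brk (LD n) (LD m) = (\<lambda>z. (if z = LD (m + n) then of_int (m - n) else 0)
       + (if z = LZ1 \<and> n = - m then (of_int n ^ 3 - of_int n) / 12 else 0))"
| "brk (LD n) (LI m) = (\<lambda>z. (if z = LI (m + n) then of_int m else 0)
       + (if z = LZ2 \<and> n = - m then of_int n ^ 2 + of_int n else 0))"
| "brk (LI m) (LD n) = (\<lambda>z. - ((if z = LI (m + n) then of_int m else 0)
       + (if z = LZ2 \<and> n = - m then of_int n ^ 2 + of_int n else 0)))"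
| "brk (LI n) (LI m) = (\<lambda>z. if z = LZ3 \<and> n = - m then of_int n else 0)"
| "brk _ _ = (\<lambda>z. 0)"

section \<open>Tensor algebra T(L): finitely supported functions on words\<close>

type_synonym tel = "Lb list \<Rightarrow> complex"

definition Tfin :: "tel set" where
  "Tfin = {t. finite {w. t w \<noteq> 0}}"

definition wd :: "Lb list \<Rightarrow> tel" where
  "wd u = (\<lambda>w. if w = u then 1 else 0)"

text \<open>Concatenation product (word u means the product u!0 * u!1 * ...).\<close>
definition tmul :: "tel \<Rightarrow> tel \<Rightarrow> tel" where
  "tmul s t = (\<lambda>w. \<Sum>i\<in>{0..length w}. s (take i w) * t (drop i w))"

definition lin :: "(Lb \<Rightarrow> complex) \<Rightarrow> tel" where
  "lin c = (\<lambda>w. case w of [z] \<Rightarrow> c z | _ \<Rightarrow> 0)"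

text \<open>x y - y x - [x,y], generating the two-sided ideal K with U(L) = T(L)/K.\<close>
definition relT :: "Lb \<Rightarrow> Lb \<Rightarrow> tel" where
  "relT x y = (\<lambda>w. wd [x, y] w - wd [y, x] w - lin (brk x y) w)"

definition gens :: "complex \<Rightarrow> complex \<Rightarrow> complex \<Rightarrow> complex \<Rightarrow> complex \<Rightarrow> tel set" where
  "gens I0 d0 z1 z2 z3 =
     {wd [LD n] | n. n > 0} \<union> {wd [LI n] | n. n > 0} \<union>
     {(\<lambda>w. wd [LD 0] w - d0 * wd [] w), (\<lambda>w. wd [LI 0] w - I0 * wd [] w),
      (\<lambda>w. wd [LZ1] w - z1 * wd [] w), (\<lambda>w. wd [LZ2] w - z2 * wd [] w),
      (\<lambda>w. wd [LZ3] w - z3 * wd [] w)}"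

text \<open>Preimage in T(L) of the left ideal I of U(L): K + T(L) * gens.\<close>
inductive_set Nid :: "complex \<Rightarrow> complex \<Rightarrow> complex \<Rightarrow> complex \<Rightarrow> complex \<Rightarrow> tel set"
  for I0 d0 z1 z2 z3 where
  zero: "(\<lambda>w. 0) \<in> Nid I0 d0 z1 z2 z3"
| add: "s \<in> Nid I0 d0 z1 z2 z3 \<Longrightarrow> t \<in> Nid I0 d0 z1 z2 z3 \<Longrightarrow> (\<lambda>w. s w + t w) \<in> Nid I0 d0 z1 z2 z3"
| scale: "s \<in> Nid I0 d0 z1 z2 z3 \<Longrightarrow> (\<lambda>w. c * s w) \<in> Nid I0 d0 z1 z2 z3"
| rel: "tmul (tmul (wd u) (relT x y)) (wd v) \<in> Nid I0 d0 z1 z2 z3"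
| gen: "g \<in> gens I0 d0 z1 z2 z3 \<Longrightarrow> tmul (wd u) g \<in> Nid I0 d0 z1 z2 z3"

section \<open>A'(a,b;F): basis x^m, m in Sset, action projected to Sset\<close>

definition Sset :: "complex \<Rightarrow> complex \<Rightarrow> complex \<Rightarrow> int set" where
  "Sset a b F = (if a \<in> \<int> \<and> (b = 0 \<or> b = 1) \<and> F = 0
                 then {m. of_int m + a \<noteq> 0} else UNIV)"

section \<open>T(L) \<otimes> A'(a,b;F) as finitely supported maps Sset \<rightarrow> T(L)\<close>

type_synonym vel = "int \<Rightarrow> tel"

definition Vsp :: "complex \<Rightarrow> complex \<Rightarrow> complex \<Rightarrow> vel set" where
  "Vsp a b F = {f. finite {m. f m \<noteq> (\<lambda>w. 0)} \<and> (\<forall>m. f m \<in> Tfin)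
                  \<and> (\<forall>m. m \<notin> Sset a b F \<longrightarrow> f m = (\<lambda>w. 0))}"

text \<open>e.(t \<otimes> x^k) = (e t) \<otimes> x^k + t \<otimes> (e x^k), with z_i acting by 0 on A'.\<close>
definition actV :: "complex \<Rightarrow> complex \<Rightarrow> complex \<Rightarrow> Lb \<Rightarrow> vel \<Rightarrow> vel" where
  "actV a b F e f = (\<lambda>m w. tmul (wd [e]) (f m) w +
      (if m \<in> Sset a b F then
         (case e of LD n \<Rightarrow> (a + of_int (m - n) + of_int n * b) * f (m - n) w
                  | LI n \<Rightarrow> F * f (m - n) w
                  | _ \<Rightarrow> 0)
       else 0))"

definition Nsub :: "complex \<Rightarrow> complex \<Rightarrow> complex \<Rightarrow> complex \<Rightarrow> complex \<Rightarrow>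
                    complex \<Rightarrow> complex \<Rightarrow> complex \<Rightarrow> vel set" where
  "Nsub I0 d0 z1 z2 z3 a b F = {f \<in> Vsp a b F. \<forall>m. f m \<in> Nid I0 d0 z1 z2 z3}"

section \<open>The quotient M \<otimes> A' = (T(L) \<otimes> A') / (N \<otimes> A') as a set of cosets\<close>

definition qcl :: "complex \<Rightarrow> complex \<Rightarrow> complex \<Rightarrow> complex \<Rightarrow> complex \<Rightarrow>
                    complex \<Rightarrow> complex \<Rightarrow> complex \<Rightarrow> vel \<Rightarrow> vel set" where
  "qcl I0 d0 z1 z2 z3 a b F f =
     {g \<in> Vsp a b F. (\<lambda>m w. g m w - f m w) \<in> Nsub I0 d0 z1 z2 z3 a b F}"

definition Wcar where
  "Wcar I0 d0 z1 z2 z3 a b F = qcl I0 d0 z1 z2 z3 a b F ` Vsp a b F"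
definition Wzero where
  "Wzero I0 d0 z1 z2 z3 a b F = qcl I0 d0 z1 z2 z3 a b F (\<lambda>m w. 0)"
definition Wadd where
  "Wadd I0 d0 z1 z2 z3 a b F X Y =
     qcl I0 d0 z1 z2 z3 a b F (\<lambda>m w. (SOME x. x \<in> X) m w + (SOME y. y \<in> Y) m w)"
definition Wscale where
  "Wscale I0 d0 z1 z2 z3 a b F c X =
     qcl I0 d0 z1 z2 z3 a b F (\<lambda>m w. c * (SOME x. x \<in> X) m w)"
definition Wact where
  "Wact I0 d0 z1 z2 z3 a b F e X =
     qcl I0 d0 z1 z2 z3 a b F (actV a b F e (SOME x. x \<in> X))"

definition submod :: "'v set \<Rightarrow> 'v \<Rightarrow> ('v \<Rightarrow> 'v \<Rightarrow> 'v) \<Rightarrow> (complex \<Rightarrow> 'v \<Rightarrow> 'v)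
                       \<Rightarrow> (Lb \<Rightarrow> 'v \<Rightarrow> 'v) \<Rightarrow> 'v set \<Rightarrow> bool" where
  "submod C z ad sc ac U \<longleftrightarrow> U \<subseteq> C \<and> z \<in> U \<and> (\<forall>x\<in>U. \<forall>y\<in>U. ad x y \<in> U)
      \<and> (\<forall>c. \<forall>x\<in>U. sc c x \<in> U) \<and> (\<forall>e. \<forall>x\<in>U. ac e x \<in> U)"

definition simple_mod :: "'v set \<Rightarrow> 'v \<Rightarrow> ('v \<Rightarrow> 'v \<Rightarrow> 'v) \<Rightarrow> (complex \<Rightarrow> 'v \<Rightarrow> 'v)
                       \<Rightarrow> (Lb \<Rightarrow> 'v \<Rightarrow> 'v) \<Rightarrow> bool" where
  "simple_mod C z ad sc ac \<longleftrightarrow> C \<noteq> {z} \<and>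
      (\<forall>U. submod C z ad sc ac U \<longrightarrow> U = {z} \<or> U = C)"

end

theory Submission
  imports Defs
begin

text \<open>
  Let \<open>v\<close> be the highest weight vector of the Verma module and \<open>x\<^sup>m\<close> the basis of \<open>A'\<close>.
  Modulo \<open>L\<^sub>-(M \<otimes> A')\<close>, where \<open>L\<^sub>-\<close> is spanned by the modes \<open>d\<^sub>n, I\<^sub>n\<close> with \<open>n < 0\<close>,
  a negative mode moves across the tensor sign at the cost of a minus sign, and a non-negative
  mode commutes through a word of \<open>U(L)\<close> down to \<open>v\<close>, on which it acts by a scalar.
  This yields for every \<open>k\<close> a linear functional \<open>\<Lambda>\<^sub>k\<close> on \<open>M \<otimes> A'\<close> that vanishes on
  \<open>L\<^sub>-(M \<otimes> A')\<close> and satisfies \<open>\<Lambda>\<^sub>k(v \<otimes> x\<^sup>m) = \<delta>\<^sub>m\<^sub>,\<^sub>k\<^sub>-\<^sub>1\<close>; well-definedness on \<open>U(L)\<close> is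
  where the Jacobi identity enters.
  Non-negative modes never lower the degree in \<open>x\<close>, so all of \<open>U(L)(v \<otimes> x\<^sup>k)\<close> lies in
  \<open>ker \<Lambda>\<^sub>k\<close>. For \<open>k\<close> with \<open>x\<^sup>k, x\<^sup>k\<^sup>-\<^sup>1 \<in> A'\<close>, the largest submodule inside \<open>ker \<Lambda>\<^sub>k\<close> thus
  contains \<open>v \<otimes> x\<^sup>k\<close>, which is non-zero as \<open>\<Lambda>\<^sub>k\<^sub>+\<^sub>1(v \<otimes> x\<^sup>k) = 1\<close>, but not \<open>v \<otimes> x\<^sup>k\<^sup>-\<^sup>1\<close>.
\<close>

section \<open>Structure constants of \<open>L\<close>\<close>

fun is_neg :: "Lb \<Rightarrow> bool" where
  "is_neg (LD n) = (n < 0)" | "is_neg (LI n) = (n < 0)" | "is_neg _ = False"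

fun mode :: "Lb \<Rightarrow> int" where
  "mode (LD n) = n" | "mode (LI n) = n" | "mode _ = 0"

fun bterms :: "Lb \<Rightarrow> Lb \<Rightarrow> (complex \<times> Lb) list" where
  "bterms (LD n) (LD m) =
     [(of_int (m - n), LD (m + n)), (if n = - m then (of_int n ^ 3 - of_int n) / 12 else 0, LZ1)]"
| "bterms (LD n) (LI m) =
     [(of_int m, LI (m + n)), (if n = - m then of_int n ^ 2 + of_int n else 0, LZ2)]"
| "bterms (LI m) (LD n) =
     [(- of_int m, LI (m + n)), (if n = - m then - (of_int n ^ 2 + of_int n) else 0, LZ2)]"
| "bterms (LI n) (LI m) = [(if n = - m then of_int n else 0, LZ3)]"
| "bterms _ _ = []"

definition lincomb :: "(complex \<times> 'w) list \<Rightarrow> ('w \<Rightarrow> complex) \<Rightarrow> complex" where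
  "lincomb cs \<phi> = sum_list (map (\<lambda>(c,w). c * \<phi> w) cs)"

text \<open>In \<open>U(L)\<close>, \<open>[e, t\<^sub>1\<cdots>t\<^sub>n] = \<Sum>\<^sub>i t\<^sub>1\<cdots>[e, t\<^sub>i]\<cdots>t\<^sub>n\<close>; \<open>ad_word e t\<close> lists the terms
  of the right-hand side.\<close>

definition ad_word :: "Lb \<Rightarrow> Lb list \<Rightarrow> (complex \<times> Lb list) list" where
  "ad_word e t = concat (map (\<lambda>i. map (\<lambda>(c,z). (c, t[i:=z])) (bterms e (t!i))) [0..<length t])"

lemma brk_eq_bterms: "brk x y z = sum_list (map (\<lambda>(c,w). if w = z then c else 0) (bterms x y))"
  by (cases x; cases y; auto)

lemma lincomb_Nil[simp]: "lincomb [] \<phi> = 0"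
  by (simp add: lincomb_def)

lemma lincomb_Cons[simp]: "lincomb ((c,w)#cs) \<phi> = c * \<phi> w + lincomb cs \<phi>"
  by (simp add: lincomb_def)

lemma lincomb_append[simp]: "lincomb (xs @ ys) \<phi> = lincomb xs \<phi> + lincomb ys \<phi>"
  by (simp add: lincomb_def)

lemma lincomb_map[simp]: "lincomb (map (\<lambda>(c,w). (c, f w)) cs) \<phi> = lincomb cs (\<lambda>w. \<phi> (f w))"
  by (induction cs) auto

lemma lincomb_zero[simp]: "lincomb cs (\<lambda>w. 0) = 0"
  by (induction cs) auto

lemma lincomb_cong: "(\<And>c w. (c,w) \<in> set cs \<Longrightarrow> \<phi> w = \<psi> w) \<Longrightarrow> lincomb cs \<phi> = lincomb cs \<psi>"
proof (induction cs)
  case (Cons p cs)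
  then show ?case by (cases p) (simp, metis list.set_intros)
qed simp

lemma lincomb_cong_weighted:
  "(\<And>c w. (c,w) \<in> set cs \<Longrightarrow> c * \<phi> w = c * \<psi> w) \<Longrightarrow> lincomb cs \<phi> = lincomb cs \<psi>"
  by (induction cs) (auto simp: lincomb_def)

lemma lincomb_lin: "lincomb cs (\<lambda>w. r * \<phi> w + \<psi> w) = r * lincomb cs \<phi> + lincomb cs \<psi>"
  by (induction cs) (auto simp: algebra_simps)

lemma lincomb_add: "lincomb cs (\<lambda>w. \<phi> w + \<psi> w) = lincomb cs \<phi> + lincomb cs \<psi>"
  using lincomb_lin[of cs 1] by simp

lemma lincomb_diff: "lincomb cs (\<lambda>w. \<phi> w - \<psi> w) = lincomb cs \<phi> - lincomb cs \<psi>"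
  by (induction cs) (auto simp: algebra_simps)

lemma lincomb_uminus: "lincomb cs (\<lambda>w. - \<phi> w) = - lincomb cs \<phi>"
  by (induction cs) (auto simp: algebra_simps)

lemma lincomb_scale: "lincomb cs (\<lambda>w. r * \<phi> w) = r * lincomb cs \<phi>"
  by (induction cs) (auto simp: algebra_simps)

lemma lincomb_scale_right: "lincomb cs (\<lambda>w. \<phi> w * r) = lincomb cs \<phi> * r"
  by (induction cs) (auto simp: algebra_simps)

lemma lincomb_swap:
  "lincomb A (\<lambda>z. lincomb B (\<lambda>w. f z w)) = lincomb B (\<lambda>w. lincomb A (\<lambda>z. f z w))"
  by (induction A) (auto simp: lincomb_lin)

lemma bterms_antisym: "lincomb (bterms y x) \<phi> = - lincomb (bterms x y) \<phi>"
  by (cases x; cases y)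
    (auto simp: algebra_simps power2_eq_square power3_eq_cube diff_divide_distrib
        add_divide_distrib)

lemma bterms_jacobi:
  "lincomb (bterms y w) (\<lambda>z. lincomb (bterms x z) \<phi>)
      - lincomb (bterms x w) (\<lambda>z. lincomb (bterms y z) \<phi>)
   = lincomb (bterms x y) (\<lambda>z. lincomb (bterms z w) \<phi>)"
proof -
  have sum_eq_neg: "((i::int) + j = - l) = (l = - i - j)" for i j l by auto
  show ?thesis
    by (cases x; cases y; cases w; auto simp: sum_eq_neg)
      (auto simp: algebra_simps power2_eq_square power3_eq_cube diff_divide_distrib
          add_divide_distrib)
qed

lemma bterms_nonneg: "\<not> is_neg x \<Longrightarrow> \<not> is_neg y \<Longrightarrow> (c,z) \<in> set (bterms x y) \<Longrightarrow> \<not> is_neg z"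
  by (cases x; cases y) auto

lemma bterms_neg: "is_neg x \<Longrightarrow> is_neg y \<Longrightarrow> (c,z) \<in> set (bterms x y) \<Longrightarrow> is_neg z \<or> c = 0"
  by (cases x; cases y) auto

lemma ad_word_length: "(c,w) \<in> set (ad_word e t) \<Longrightarrow> length w = length t"
  by (auto simp: ad_word_def)

lemma ad_word_Nil[simp]: "ad_word e [] = []"
  by (simp add: ad_word_def)

lemma ad_word_Cons:
  "ad_word e (a # t) = map (\<lambda>(c,z). (c, z # t)) (bterms e a)
      @ map (\<lambda>(c,w). (c, a # w)) (ad_word e t)"
proof -
  have "[0..<length (a#t)] = 0 # map Suc [0..<length t]"
    by (simp add: upt_conv_Cons map_Suc_upt del: upt_Suc)
  then show ?thesis
    by (simp add: ad_word_def map_concat comp_def case_prod_unfold)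
qed

lemma ad_word_append:
  "ad_word e (u @ v) = map (\<lambda>(c,w). (c, w @ v)) (ad_word e u)
      @ map (\<lambda>(c,w). (c, u @ w)) (ad_word e v)"
  by (induction u) (auto simp: ad_word_Cons map_concat comp_def case_prod_unfold)

lemma ad_word_single: "ad_word e [x] = map (\<lambda>(c,z). (c, [z])) (bterms e x)"
  by (simp add: ad_word_Cons)

lemma ad_word_commutator:
  "lincomb (ad_word y w) (\<lambda>w'. lincomb (ad_word x w') \<phi>)
      - lincomb (ad_word x w) (\<lambda>w'. lincomb (ad_word y w') \<phi>)
   = lincomb (bterms x y) (\<lambda>z. lincomb (ad_word z w) \<phi>)"
proof (induction w arbitrary: \<phi>)
  case (Cons a t)
  have jacobi: "lincomb (bterms y a) (\<lambda>z. lincomb (bterms x z) (\<lambda>z'. \<phi> (z' # t)))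
      - lincomb (bterms x a) (\<lambda>z. lincomb (bterms y z) (\<lambda>z'. \<phi> (z' # t)))
      = lincomb (bterms x y) (\<lambda>z. lincomb (bterms z a) (\<lambda>z'. \<phi> (z' # t)))"
    by (rule bterms_jacobi)
  have IH: "lincomb (ad_word y t) (\<lambda>w'. lincomb (ad_word x w') (\<lambda>w. \<phi> (a # w)))
      - lincomb (ad_word x t) (\<lambda>w'. lincomb (ad_word y w') (\<lambda>w. \<phi> (a # w)))
      = lincomb (bterms x y) (\<lambda>z. lincomb (ad_word z t) (\<lambda>w. \<phi> (a # w)))"
    by (rule Cons)
  show ?case
    using jacobi IH lincomb_swap[of "bterms y a" "ad_word x t" "\<lambda>z w. \<phi> (z # w)"]
      lincomb_swap[of "bterms x a" "ad_word y t" "\<lambda>z w. \<phi> (z # w)"]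
    by (simp add: ad_word_Cons lincomb_add lincomb_diff[symmetric] algebra_simps)
qed simp

section \<open>The tensor algebra \<open>T(L)\<close>\<close>

definition tpair :: "tel \<Rightarrow> (Lb list \<Rightarrow> complex) \<Rightarrow> complex" where
  "tpair t \<phi> = (\<Sum>w\<in>{w. t w \<noteq> 0}. t w * \<phi> w)"

lemma Tfin_zero: "(\<lambda>w. 0) \<in> Tfin"
  by (simp add: Tfin_def)

lemma Tfin_add: "s \<in> Tfin \<Longrightarrow> t \<in> Tfin \<Longrightarrow> (\<lambda>w. s w + t w) \<in> Tfin"
proof -
  assume "s \<in> Tfin" "t \<in> Tfin"
  then have "finite ({w. s w \<noteq> 0} \<union> {w. t w \<noteq> 0})" by (simp add: Tfin_def)
  moreover have "{w. s w + t w \<noteq> 0} \<subseteq> {w. s w \<noteq> 0} \<union> {w. t w \<noteq> 0}" by auto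
  ultimately show ?thesis unfolding Tfin_def using finite_subset by blast
qed

lemma Tfin_scale: "t \<in> Tfin \<Longrightarrow> (\<lambda>w. c * t w) \<in> Tfin"
  unfolding Tfin_def by (rule CollectI, rule finite_subset[of _ "{w. t w \<noteq> 0}"]) auto

lemma Tfin_diff: "s \<in> Tfin \<Longrightarrow> t \<in> Tfin \<Longrightarrow> (\<lambda>w. s w - t w) \<in> Tfin"
  using Tfin_add[OF _ Tfin_scale, of s t "-1"] by simp

lemma Tfin_wd: "wd u \<in> Tfin"
proof -
  have "{w. wd u w \<noteq> 0} = {u}" by (auto simp: wd_def)
  then show ?thesis by (simp add: Tfin_def)
qed

lemma Tfin_lincomb: "(\<And>z. g z \<in> Tfin) \<Longrightarrow> (\<lambda>w. lincomb cs (\<lambda>z. g z w)) \<in> Tfin"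
proof (induction cs)
  case (Cons p cs)
  obtain c z where p: "p = (c,z)" by force
  show ?case using Tfin_add[OF Tfin_scale[OF Cons.prems[of z], of c] Cons.IH[OF Cons.prems]]
    by (simp add: p)
qed (simp add: Tfin_zero)

lemma Tfin_induct[consumes 1, case_names zero step]:
  assumes "t \<in> Tfin"
    and zero: "P (\<lambda>w. 0)"
    and step: "\<And>u c t. P t \<Longrightarrow> P (\<lambda>w. c * wd u w + t w)"
  shows "P t"
proof -
  have "P t" if "finite A" "{w. t w \<noteq> 0} = A" for A t
    using that
  proof (induction A arbitrary: t rule: finite_induct)
    case empty
    then have "t = (\<lambda>w. 0)" by auto
    then show ?case using zero by simp
  next
    case (insert u A)
    have "{w. (t(u := 0)) w \<noteq> 0} = A" using insert by auto
    then have "P (\<lambda>w. t u * wd u w + (t(u := 0)) w)" by (rule step[OF insert.IH])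
    moreover have "(\<lambda>w. t u * wd u w + (t(u := 0)) w) = t" by (auto simp: wd_def)
    ultimately show ?case by simp
  qed
  then show ?thesis using assms(1) by (auto simp: Tfin_def)
qed

lemma tpair_superset: "finite A \<Longrightarrow> {w. t w \<noteq> 0} \<subseteq> A \<Longrightarrow> tpair t \<phi> = (\<Sum>w\<in>A. t w * \<phi> w)"
  unfolding tpair_def by (rule sum.mono_neutral_left) auto

lemma tpair_add: "s \<in> Tfin \<Longrightarrow> t \<in> Tfin \<Longrightarrow> tpair (\<lambda>w. s w + t w) \<phi> = tpair s \<phi> + tpair t \<phi>"
proof -
  assume s: "s \<in> Tfin" and t: "t \<in> Tfin"
  let ?A = "{w. s w \<noteq> 0} \<union> {w. t w \<noteq> 0}"
  have A: "finite ?A" using s t by (simp add: Tfin_def)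
  have "tpair (\<lambda>w. s w + t w) \<phi> = (\<Sum>w\<in>?A. (s w + t w) * \<phi> w)"
    by (rule tpair_superset[OF A]) auto
  also have "\<dots> = (\<Sum>w\<in>?A. s w * \<phi> w) + (\<Sum>w\<in>?A. t w * \<phi> w)"
    by (simp add: distrib_right sum.distrib)
  also have "\<dots> = tpair s \<phi> + tpair t \<phi>"
    using tpair_superset[OF A, of s \<phi>] tpair_superset[OF A, of t \<phi>] by auto
  finally show ?thesis .
qed

lemma tpair_scale: "tpair (\<lambda>w. c * t w) \<phi> = c * tpair t \<phi>"
  by (cases "c = 0") (simp_all add: tpair_def sum_distrib_left mult.assoc)

lemma tpair_diff: "s \<in> Tfin \<Longrightarrow> t \<in> Tfin \<Longrightarrow> tpair (\<lambda>w. s w - t w) \<phi> = tpair s \<phi> - tpair t \<phi>"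
  using tpair_add[of s "\<lambda>w. (-1) * t w" \<phi>] tpair_scale[of "-1" t \<phi>] Tfin_scale[of t "-1"] by simp

lemma tpair_scale_fun: "tpair t (\<lambda>w. c * \<phi> w) = c * tpair t \<phi>"
  by (simp add: tpair_def sum_distrib_left algebra_simps)

lemma tpair_wd: "tpair (wd u) \<phi> = \<phi> u"
proof -
  have "{w. wd u w \<noteq> 0} = {u}" by (auto simp: wd_def)
  then show ?thesis by (simp add: tpair_def wd_def)
qed

lemma tpair_lincomb:
  "(\<And>z. g z \<in> Tfin) \<Longrightarrow> tpair (\<lambda>w. lincomb cs (\<lambda>z. g z w)) \<phi> = lincomb cs (\<lambda>z. tpair (g z) \<phi>)"
proof (induction cs)
  case (Cons p cs)
  obtain c z where p: "p = (c,z)" by force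
  have "tpair (\<lambda>w. c * g z w + lincomb cs (\<lambda>z. g z w)) \<phi>
      = tpair (\<lambda>w. c * g z w) \<phi> + tpair (\<lambda>w. lincomb cs (\<lambda>z. g z w)) \<phi>"
    by (rule tpair_add[OF Tfin_scale[OF Cons.prems] Tfin_lincomb[OF Cons.prems]])
  then show ?case using Cons by (simp add: p tpair_scale)
qed (simp add: tpair_def)

lemma tmul_wd_left:
  "tmul (wd u) t = (\<lambda>w. if take (length u) w = u then t (drop (length u) w) else 0)"
proof (rule ext)
  fix w
  have "tmul (wd u) t w = (\<Sum>i\<in>{0..length w}. if i = length u then
          (if take (length u) w = u then t (drop i w) else 0) else 0)"
    unfolding tmul_def wd_def
  proof (rule sum.cong)
    fix i assume "i \<in> {0..length w}"
    then have "length (take i w) = i" by simp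
    then show "(if take i w = u then 1 else 0) * t (drop i w)
        = (if i = length u then (if take (length u) w = u then t (drop i w) else 0) else 0)"
      by (cases "take i w = u") auto
  qed simp
  also have "\<dots> = (if take (length u) w = u then t (drop (length u) w) else 0)"
    by (auto simp: min_def dest: arg_cong[of _ _ length])
  finally show "tmul (wd u) t w = (if take (length u) w = u then t (drop (length u) w) else 0)" .
qed

lemma tmul_wd_right:
  "tmul t (wd v) = (\<lambda>w. if length v \<le> length w \<and> drop (length w - length v) w = v
                         then t (take (length w - length v) w) else 0)"
proof (rule ext)
  fix w
  have "tmul t (wd v) w = (\<Sum>i\<in>{0..length w}. if i = length w - length v then
          (if length v \<le> length w \<and> drop (length w - length v) w = v
           then t (take i w) else 0) else 0)"
    unfolding tmul_def wd_def
    by (rule sum.cong) (auto dest: arg_cong[of _ _ length])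
  then show "tmul t (wd v) w = (if length v \<le> length w \<and> drop (length w - length v) w = v
                                then t (take (length w - length v) w) else 0)"
    by auto
qed

lemma tmul_wd_left_support: "{w. tmul (wd u) t w \<noteq> 0} = (\<lambda>w. u @ w) ` {w. t w \<noteq> 0}"
  unfolding tmul_wd_left by (auto simp: image_iff) (metis append_take_drop_id)

lemma tmul_wd_right_support: "{w. tmul t (wd v) w \<noteq> 0} = (\<lambda>w. w @ v) ` {w. t w \<noteq> 0}"
  unfolding tmul_wd_right by (auto simp: image_iff) (metis append_take_drop_id)

lemma Tfin_tmul_wd_left: "t \<in> Tfin \<Longrightarrow> tmul (wd u) t \<in> Tfin"
  by (simp add: Tfin_def tmul_wd_left_support)

lemma Tfin_tmul_wd_right: "t \<in> Tfin \<Longrightarrow> tmul t (wd v) \<in> Tfin"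
  by (simp add: Tfin_def tmul_wd_right_support)

lemma tpair_tmul_wd_left: "tpair (tmul (wd u) t) \<phi> = tpair t (\<lambda>w. \<phi> (u @ w))"
  unfolding tpair_def tmul_wd_left_support
  by (subst sum.reindex) (auto simp: inj_on_def tmul_wd_left)

lemma tpair_tmul_wd_right: "tpair (tmul t (wd v)) \<phi> = tpair t (\<lambda>w. \<phi> (w @ v))"
  unfolding tpair_def tmul_wd_right_support
  by (subst sum.reindex) (auto simp: inj_on_def tmul_wd_right)

lemma tmul_lin_right: "tmul s (\<lambda>w. c * t w + t' w) = (\<lambda>w. c * tmul s t w + tmul s t' w)"
  by (rule ext) (simp add: tmul_def algebra_simps sum.distrib sum_distrib_left)

lemma tmul_lin_left: "tmul (\<lambda>w. c * s w + s' w) t = (\<lambda>w. c * tmul s t w + tmul s' t w)"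
  by (rule ext) (simp add: tmul_def algebra_simps sum.distrib sum_distrib_left)

lemma tmul_add_right: "tmul s (\<lambda>w. t w + t' w) = (\<lambda>w. tmul s t w + tmul s t' w)"
  using tmul_lin_right[of s 1 t t'] by simp

lemma tmul_scale_right: "tmul s (\<lambda>w. c * t w) = (\<lambda>w. c * tmul s t w)"
  using tmul_lin_right[of s c t "\<lambda>w. 0"] by (simp add: tmul_def)

lemma tmul_diff_left: "tmul (\<lambda>w. s w - s' w) t = (\<lambda>w. tmul s t w - tmul s' t w)"
  using tmul_lin_left[of "-1" s' s t] by simp

lemma tmul_lincomb_left:
  "tmul (\<lambda>w. lincomb cs (\<lambda>z. g z w)) t = (\<lambda>w. lincomb cs (\<lambda>z. tmul (g z) t w))"
proof (induction cs)
  case (Cons p cs)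
  obtain c z where p: "p = (c,z)" by force
  show ?case using Cons by (simp add: p tmul_lin_left)
qed (simp add: tmul_def)

lemma tmul_wd_Cons: "tmul (wd [e]) (tmul (wd u) t) = tmul (wd (e # u)) t"
proof (rule ext)
  fix x show "tmul (wd [e]) (tmul (wd u) t) x = tmul (wd (e # u)) t x"
    by (cases x) (auto simp: tmul_wd_left)
qed

lemma tmul_wd_Nil_right: "tmul (wd [e]) (wd []) = wd [e]"
  unfolding tmul_wd_left
proof (rule ext)
  fix x show "(if take (length [e]) x = [e] then wd [] (drop (length [e]) x) else 0) = wd [e] x"
    by (cases x) (auto simp: wd_def)
qed

lemma tmul_wd_assoc: "tmul (wd [e]) (tmul s (wd v)) = tmul (tmul (wd [e]) s) (wd v)"
proof (rule ext)
  fix x show "tmul (wd [e]) (tmul s (wd v)) x = tmul (tmul (wd [e]) s) (wd v) x"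
  proof (cases x)
    case (Cons a x')
    show ?thesis
    proof (cases "length v \<le> length x'")
      case True
      then have "Suc (length x') - length v = Suc (length x' - length v)" by simp
      then show ?thesis using True Cons by (simp add: tmul_wd_left tmul_wd_right)
    qed (use Cons in \<open>auto simp: tmul_wd_left tmul_wd_right\<close>)
  qed (simp add: tmul_wd_left tmul_wd_right)
qed

lemma relT_eq_lincomb: "relT x y = (\<lambda>w. wd [x,y] w - wd [y,x] w
    - lincomb (bterms x y) (\<lambda>z. wd [z] w))"
proof (rule ext)
  fix w
  have "lin (brk x y) w = lincomb (bterms x y) (\<lambda>z. wd [z] w)"
  proof (cases "\<exists>z. w = [z]")
    case True
    then obtain z where w: "w = [z]" by blast
    have "lincomb cs (\<lambda>z'. wd [z'] [z]) = sum_list (map (\<lambda>(c,w). if w = z then c else 0) cs)" for cs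
      by (induction cs) (auto simp: wd_def)
    then show ?thesis by (simp add: lin_def w brk_eq_bterms)
  next
    case False
    then have "lin (brk x y) w = 0" by (auto simp: lin_def split: list.split)
    moreover have "lincomb cs (\<lambda>z. wd [z] w) = 0" for cs
      using False by (induction cs) (auto simp: wd_def)
    ultimately show ?thesis by simp
  qed
  then show "relT x y w = wd [x,y] w - wd [y,x] w - lincomb (bterms x y) (\<lambda>z. wd [z] w)"
    by (simp add: relT_def)
qed

lemma Tfin_relT: "relT x y \<in> Tfin"
  unfolding relT_eq_lincomb by (intro Tfin_diff Tfin_wd Tfin_lincomb)

section \<open>The module \<open>T(L) \<otimes> A'\<close> and the quotient \<open>M \<otimes> A'\<close>\<close>

lemma Sset_cases:
  "Sset a b F = UNIV \<or> (\<exists>p. a = of_int p \<and> (b = 0 \<or> b = 1) \<and> F = 0 \<and> Sset a b F = {m. m \<noteq> - p})"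
proof (cases "a \<in> \<int> \<and> (b = 0 \<or> b = 1) \<and> F = 0")
  case True
  then obtain p where p: "a = of_int p" by (auto elim: Ints_cases)
  have "(of_int m + a \<noteq> 0) = (m \<noteq> - p)" for m
  proof -
    have "(of_int m + a = 0) = (of_int (m + p) = (0::complex))" by (simp add: p)
    also have "\<dots> = (m = - p)" by (simp only: of_int_eq_0_iff) linarith
    finally show ?thesis by simp
  qed
  then show ?thesis using True p by (auto simp: Sset_def)
qed (auto simp: Sset_def)

lemma Sset_consecutive: "\<exists>k. k \<in> Sset a b F \<and> k - 1 \<in> Sset a b F"
  using Sset_cases[of a b F]
proof
  assume "\<exists>p. a = of_int p \<and> (b = 0 \<or> b = 1) \<and> F = 0 \<and> Sset a b F = {m. m \<noteq> - p}"
  then obtain p where "Sset a b F = {m. m \<noteq> - p}" by blast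
  then show ?thesis by (intro exI[of _ "2 - p"]) simp
qed auto

definition delta :: "int \<Rightarrow> int \<Rightarrow> complex" where
  "delta m = (\<lambda>j. if j = m then 1 else 0)"

locale tensor_setting =
  fixes I0 d0 z1 z2 z3 a b Fp :: complex
begin

abbreviation Ni where "Ni \<equiv> Nid I0 d0 z1 z2 z3"
abbreviation Vs where "Vs \<equiv> Vsp a b Fp"
abbreviation Ns where "Ns \<equiv> Nsub I0 d0 z1 z2 z3 a b Fp"
abbreviation act where "act \<equiv> actV a b Fp"
abbreviation cls where "cls \<equiv> qcl I0 d0 z1 z2 z3 a b Fp"

fun chi :: "Lb \<Rightarrow> complex" where
  "chi (LD n) = (if n = 0 then d0 else 0)"
| "chi (LI n) = (if n = 0 then I0 else 0)"
| "chi LZ1 = z1" | "chi LZ2 = z2" | "chi LZ3 = z3"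

lemma chi_bterms_nonneg:
  assumes "\<not> is_neg x" "\<not> is_neg y"
  shows "lincomb (bterms x y) chi = 0"
proof -
  have sum_eq_0: "\<not> (i::int) < 0 \<Longrightarrow> \<not> j < 0 \<Longrightarrow> (i + j = 0) = (i = 0 \<and> j = 0)" for i j
    by auto
  show ?thesis using assms by (cases x; cases y) (auto simp: sum_eq_0)
qed

lemma Nid_comb: "s \<in> Ni \<Longrightarrow> t \<in> Ni \<Longrightarrow> (\<lambda>w. c * s w + t w) \<in> Ni"
  by (rule Nid.add[OF Nid.scale])

lemma Nid_Tfin: "t \<in> Ni \<Longrightarrow> t \<in> Tfin"
proof (induction rule: Nid.induct)
  case (gen g u)
  have "g \<in> Tfin" using gen by (auto simp: gens_def intro!: Tfin_diff Tfin_scale Tfin_wd)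
  then show ?case by (rule Tfin_tmul_wd_left)
qed (auto intro: Tfin_zero Tfin_add Tfin_scale Tfin_tmul_wd_left Tfin_tmul_wd_right Tfin_relT)

lemma tmul_relT_Nid: "t \<in> Tfin \<Longrightarrow> tmul (relT x y) t \<in> Ni"
proof (induction rule: Tfin_induct)
  case zero
  show ?case using Nid.zero by (simp add: tmul_def)
next
  case (step u c t)
  moreover have "tmul (relT x y) (wd u) \<in> Ni"
    using Nid.rel[of "[]" x y u I0 d0 z1 z2 z3] by (simp add: tmul_wd_left)
  ultimately show ?case by (simp add: tmul_lin_right Nid_comb)
qed

lemma Nid_tmul_wd: "t \<in> Ni \<Longrightarrow> tmul (wd [e]) t \<in> Ni"
proof (induction rule: Nid.induct)
  case zero
  then show ?case using Nid.zero by (simp add: tmul_def)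
next
  case (add s t)
  then show ?case by (simp add: tmul_add_right Nid.add)
next
  case (scale s c)
  then show ?case by (simp add: tmul_scale_right Nid.scale)
next
  case (rel u x y v)
  have "tmul (wd [e]) (tmul (tmul (wd u) (relT x y)) (wd v))
      = tmul (tmul (wd (e # u)) (relT x y)) (wd v)"
    by (simp add: tmul_wd_assoc tmul_wd_Cons)
  then show ?case by (simp add: Nid.rel)
next
  case (gen g u)
  then show ?case by (simp add: tmul_wd_Cons Nid.gen)
qed

lemma Nid_vacuum: "\<not> is_neg e \<Longrightarrow> (\<lambda>w. wd [e] w - chi e * wd [] w) \<in> Ni"
proof -
  assume "\<not> is_neg e"
  then have "(\<lambda>w. wd [e] w - chi e * wd [] w) \<in> gens I0 d0 z1 z2 z3"
    by (cases e) (auto simp: gens_def)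
  then show ?thesis using Nid.gen[of _ I0 d0 z1 z2 z3 "[]"] by (simp add: tmul_wd_left)
qed

lemma Vsp_finite: "F \<in> Vs \<Longrightarrow> finite {m. F m \<noteq> (\<lambda>w. 0)}"
  by (simp add: Vsp_def)

lemma Vsp_Tfin: "F \<in> Vs \<Longrightarrow> F m \<in> Tfin"
  by (simp add: Vsp_def)

lemma Vsp_outside: "F \<in> Vs \<Longrightarrow> m \<notin> Sset a b Fp \<Longrightarrow> F m = (\<lambda>w. 0)"
  by (simp add: Vsp_def)

lemma Vsp_comb: "F \<in> Vs \<Longrightarrow> G \<in> Vs \<Longrightarrow> (\<lambda>m w. c * F m w + G m w) \<in> Vs"
proof -
  assume F: "F \<in> Vs" and G: "G \<in> Vs"
  have "{m. (\<lambda>w. c * F m w + G m w) \<noteq> (\<lambda>w. 0)} \<subseteq> {m. F m \<noteq> (\<lambda>w. 0)} \<union> {m. G m \<noteq> (\<lambda>w. 0)}"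
    by auto
  then have "finite {m. (\<lambda>w. c * F m w + G m w) \<noteq> (\<lambda>w. 0)}"
    using Vsp_finite[OF F] Vsp_finite[OF G] finite_subset by blast
  moreover have "(\<lambda>w. c * F m w + G m w) \<in> Tfin" for m
    using Tfin_add[OF Tfin_scale[OF Vsp_Tfin[OF F]] Vsp_Tfin[OF G]] by simp
  ultimately show ?thesis using F G by (auto simp: Vsp_def)
qed

lemma Vsp_zero: "(\<lambda>m w. 0) \<in> Vs"
  by (simp add: Vsp_def Tfin_zero)

lemma Vsp_add: "F \<in> Vs \<Longrightarrow> G \<in> Vs \<Longrightarrow> (\<lambda>m w. F m w + G m w) \<in> Vs"
  using Vsp_comb[of F G 1] by simp

lemma Vsp_scale: "F \<in> Vs \<Longrightarrow> (\<lambda>m w. c * F m w) \<in> Vs"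
  using Vsp_comb[of F "\<lambda>m w. 0" c] Vsp_zero by simp

lemma Vsp_diff: "F \<in> Vs \<Longrightarrow> G \<in> Vs \<Longrightarrow> (\<lambda>m w. F m w - G m w) \<in> Vs"
  using Vsp_comb[of G F "-1"] by simp

lemma Vsp_lincomb: "(\<And>z. G z \<in> Vs) \<Longrightarrow> (\<lambda>m w. lincomb cs (\<lambda>z. G z m w)) \<in> Vs"
proof (induction cs)
  case (Cons p cs)
  obtain c z where p: "p = (c,z)" by force
  show ?case using Vsp_comb[OF Cons.prems[of z] Cons.IH[OF Cons.prems], where c=c] by (simp add: p)
qed (simp add: Vsp_zero)

lemma Nsub_Vsp: "F \<in> Ns \<Longrightarrow> F \<in> Vs"
  by (simp add: Nsub_def)

lemma Nsub_Nid: "F \<in> Ns \<Longrightarrow> F m \<in> Ni"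
  by (simp add: Nsub_def)

lemma Nsub_zero: "(\<lambda>m w. 0) \<in> Ns"
  by (simp add: Nsub_def Vsp_zero Nid.zero)

lemma Nsub_add: "F \<in> Ns \<Longrightarrow> G \<in> Ns \<Longrightarrow> (\<lambda>m w. F m w + G m w) \<in> Ns"
  using Nid_comb[of _ _ 1] by (auto simp: Nsub_def intro: Vsp_add)

lemma qcl_self: "F \<in> Vs \<Longrightarrow> F \<in> cls F"
  by (simp add: qcl_def Nsub_zero)

lemma qcl_some:
  "F \<in> Vs \<Longrightarrow> (SOME x. x \<in> cls F) \<in> Vs \<and> (\<lambda>m w. (SOME x. x \<in> cls F) m w - F m w) \<in> Ns"
  using someI[of "\<lambda>x. x \<in> cls F", OF qcl_self] by (simp add: qcl_def)

text \<open>A function \<open>y :: int \<Rightarrow> complex\<close> stands for \<open>\<Sum>\<^sub>m y m x\<^sup>m \<in> A'\<close>, whose basis is indexed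
  by \<open>Sset a b Fp\<close>.\<close>

definition restr :: "(int \<Rightarrow> complex) \<Rightarrow> int \<Rightarrow> complex" where
  "restr y j = (if j \<in> Sset a b Fp then y j else 0)"

definition act_coef :: "Lb \<Rightarrow> int \<Rightarrow> complex" where
  "act_coef e m = (if m \<in> Sset a b Fp then
     (case e of LD n \<Rightarrow> a + of_int (m - n) + of_int n * b | LI n \<Rightarrow> Fp | _ \<Rightarrow> 0) else 0)"

definition actA :: "Lb \<Rightarrow> (int \<Rightarrow> complex) \<Rightarrow> int \<Rightarrow> complex" where
  "actA e y = (\<lambda>m. act_coef e m * restr y (m - mode e))"

lemma actA_lin: "actA e (\<lambda>m. c * y m + y' m) = (\<lambda>m. c * actA e y m + actA e y' m)"
  by (rule ext) (simp add: actA_def restr_def algebra_simps)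

lemma restr_act_coef: "restr (\<lambda>m. act_coef e m * y m) = (\<lambda>m. act_coef e m * y m)"
  by (rule ext) (simp add: restr_def act_coef_def)

lemma actA_delta:
  "actA e (delta m) = (\<lambda>j. (if m \<in> Sset a b Fp then act_coef e (m + mode e) else 0)
      * delta (m + mode e) j)"
  by (rule ext) (auto simp: actA_def restr_def delta_def)

lemma actA_commutator: "actA x (actA y y0) m - actA y (actA x y0) m
    = lincomb (bterms x y) (\<lambda>z. actA z y0 m)"
  using Sset_cases[of a b Fp]
proof
  assume S: "Sset a b Fp = UNIV"
  show ?thesis
    unfolding actA_def act_coef_def restr_def S by (cases x; cases y) (auto simp: algebra_simps)
next
  assume "\<exists>p. a = of_int p \<and> (b = 0 \<or> b = 1) \<and> Fp = 0 \<and> Sset a b Fp = {m. m \<noteq> - p}"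
  then obtain p where p: "a = of_int p" "b = 0 \<or> b = 1" "Fp = 0" "Sset a b Fp = {m. m \<noteq> - p}"
    by blast
  show ?thesis using p(2) unfolding actA_def act_coef_def restr_def p(4)
    by (cases x; cases y) (auto simp: p(1,3) algebra_simps)
qed

lemma finite_support_actA:
  "finite {m. y m \<noteq> 0} \<Longrightarrow> finite {m. c * y m + actA e y m \<noteq> 0}"
proof -
  assume y: "finite {m. y m \<noteq> 0}"
  have "{m. c * y m + actA e y m \<noteq> 0} \<subseteq> {m. y m \<noteq> 0} \<union> (\<lambda>j. j + mode e) ` {m. y m \<noteq> 0}"
    by (auto simp: actA_def restr_def image_iff) (metis diff_add_cancel)
  then show ?thesis using y finite_subset by blast
qed

lemma actV_eq: "act e F = (\<lambda>m w. tmul (wd [e]) (F m) w + act_coef e m * F (m - mode e) w)"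
  by (rule ext, rule ext) (auto simp: actV_def act_coef_def split: Lb.split)

lemma actV_support:
  "{m. act e F m \<noteq> (\<lambda>w. 0)} \<subseteq> {m. F m \<noteq> (\<lambda>w. 0)} \<union> (\<lambda>j. j + mode e) ` {m. F m \<noteq> (\<lambda>w. 0)}"
proof
  fix m assume m: "m \<in> {m. act e F m \<noteq> (\<lambda>w. 0)}"
  show "m \<in> {m. F m \<noteq> (\<lambda>w. 0)} \<union> (\<lambda>j. j + mode e) ` {m. F m \<noteq> (\<lambda>w. 0)}"
  proof (rule ccontr)
    assume "m \<notin> {m. F m \<noteq> (\<lambda>w. 0)} \<union> (\<lambda>j. j + mode e) ` {m. F m \<noteq> (\<lambda>w. 0)}"
    then have "F m = (\<lambda>w. 0)" "F (m - mode e) = (\<lambda>w. 0)" by (auto simp: image_iff)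
    then show False using m by (simp add: actV_eq tmul_def)
  qed
qed

lemma actV_Vsp: "F \<in> Vs \<Longrightarrow> act e F \<in> Vs"
proof -
  assume F: "F \<in> Vs"
  have "finite {m. act e F m \<noteq> (\<lambda>w. 0)}"
    using actV_support[of e F] Vsp_finite[OF F] finite_subset by blast
  moreover have "act e F m \<in> Tfin" for m
    unfolding actV_eq
    using Tfin_add[OF Tfin_tmul_wd_left[OF Vsp_Tfin[OF F]] Tfin_scale[OF Vsp_Tfin[OF F]]] by simp
  moreover have "act e F m = (\<lambda>w. 0)" if "m \<notin> Sset a b Fp" for m
    using that Vsp_outside[OF F that] by (simp add: actV_eq act_coef_def tmul_def)
  ultimately show ?thesis by (simp add: Vsp_def)
qed

lemma actV_lin: "act e (\<lambda>m w. c * F m w + G m w) = (\<lambda>m w. c * act e F m w + act e G m w)"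
  by (simp add: actV_eq tmul_lin_right) (simp add: algebra_simps)

lemma actV_add: "act e (\<lambda>m w. F m w + G m w) = (\<lambda>m w. act e F m w + act e G m w)"
  using actV_lin[of e 1 F G] by simp

lemma actV_diff: "act e (\<lambda>m w. F m w - G m w) = (\<lambda>m w. act e F m w - act e G m w)"
  using actV_lin[of e "-1" G F] by simp

lemma actV_lincomb: "act e (\<lambda>m w. lincomb cs (\<lambda>z. G z m w))
    = (\<lambda>m w. lincomb cs (\<lambda>z. act e (G z) m w))"
proof (induction cs)
  case (Cons p cs)
  obtain c z where p: "p = (c,z)" by force
  show ?case using Cons by (simp add: p actV_lin)
qed (simp add: actV_eq tmul_def)

lemma actV_Nsub: "F \<in> Ns \<Longrightarrow> act e F \<in> Ns"
proof -
  assume F: "F \<in> Ns"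
  have "act e F m \<in> Ni" for m
    using Nid_comb[OF Nsub_Nid[OF F] Nid_tmul_wd[OF Nsub_Nid[OF F]],
        of "act_coef e m" "m - mode e" e m]
    by (simp add: actV_eq add.commute)
  then show ?thesis using actV_Vsp[OF Nsub_Vsp[OF F]] by (simp add: Nsub_def)
qed

lemma actV_commutator_eq:
  assumes F: "F \<in> Vs"
  shows "act e (act e' F) m w - act e' (act e F) m w - lincomb (bterms e e') (\<lambda>z. act z F m w)
    = tmul (relT e e') (F m) w"
proof -
  define y where "y = (\<lambda>j. F j w)"
  have restr_y: "restr y = y" by (rule ext) (simp add: restr_def y_def Vsp_outside[OF F])
  have coef: "act_coef e m * (act_coef e' (m - mode e) * F (m - mode e - mode e') w)
      - act_coef e' m * (act_coef e (m - mode e') * F (m - mode e' - mode e) w)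
      = lincomb (bterms e e') (\<lambda>z. act_coef z m * F (m - mode z) w)"
    using actA_commutator[of e e' y m] unfolding actA_def restr_act_coef restr_y
    by (simp add: y_def)
  have tensor: "tmul (wd [e]) (tmul (wd [e']) (F m)) w - tmul (wd [e']) (tmul (wd [e]) (F m)) w
      - lincomb (bterms e e') (\<lambda>z. tmul (wd [z]) (F m) w) = tmul (relT e e') (F m) w"
    unfolding relT_eq_lincomb tmul_diff_left tmul_lincomb_left tmul_wd_Cons by simp
  show ?thesis
    by (simp add: actV_eq tmul_add_right tmul_scale_right lincomb_add)
      (use coef tensor in \<open>simp add: algebra_simps\<close>)
qed

lemma actV_commutator:
  "F \<in> Vs \<Longrightarrow> (\<lambda>m w. act e (act e' F) m w - act e' (act e F) m w
      - lincomb (bterms e e') (\<lambda>z. act z F m w)) \<in> Ns"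
proof -
  assume F: "F \<in> Vs"
  have "(\<lambda>m w. act e (act e' F) m w - act e' (act e F) m w
      - lincomb (bterms e e') (\<lambda>z. act z F m w)) \<in> Vs"
    by (intro Vsp_diff Vsp_lincomb actV_Vsp F)
  then show ?thesis by (simp add: Nsub_def actV_commutator_eq[OF F] tmul_relT_Nid Vsp_Tfin[OF F])
qed

fun act_word :: "Lb list \<Rightarrow> vel \<Rightarrow> vel" where
  "act_word [] F = F"
| "act_word (e # s) F = act e (act_word s F)"

lemma act_word_Vsp: "F \<in> Vs \<Longrightarrow> act_word s F \<in> Vs"
  by (induction s) (auto intro: actV_Vsp)

lemma act_word_Nsub: "F \<in> Ns \<Longrightarrow> act_word s F \<in> Ns"
  by (induction s) (auto intro: actV_Nsub)

lemma act_word_lin: "act_word s (\<lambda>m w. c * F m w + G m w)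
    = (\<lambda>m w. c * act_word s F m w + act_word s G m w)"
  by (induction s) (auto simp: actV_lin)

lemma act_word_add: "act_word s (\<lambda>m w. F m w + G m w) = (\<lambda>m w. act_word s F m w + act_word s G m w)"
  using act_word_lin[of s 1 F G] by simp

lemma act_word_diff: "act_word s (\<lambda>m w. F m w - G m w)
    = (\<lambda>m w. act_word s F m w - act_word s G m w)"
  using act_word_lin[of s "-1" G F] by simp

lemma act_word_zero: "act_word s (\<lambda>m w. 0) = (\<lambda>m w. 0)"
  by (induction s) (simp_all add: actV_eq tmul_def)

lemma act_word_scale: "act_word s (\<lambda>m w. c * F m w) = (\<lambda>m w. c * act_word s F m w)"
  using act_word_lin[of s c F "\<lambda>m w. 0"] by (simp add: act_word_zero)

lemma act_word_snoc: "act_word (s @ [e]) F = act_word s (act e F)"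
  by (induction s) auto

lemma act_word_commutator:
  "F \<in> Vs \<Longrightarrow> (\<lambda>m w. act e (act_word s F) m w
      - (act_word s (act e F) m w + lincomb (ad_word e s) (\<lambda>s'. act_word s' F m w))) \<in> Ns"
proof (induction s)
  case Nil
  then show ?case by (simp add: Nsub_zero)
next
  case (Cons e1 s)
  define X where "X = act_word s F"
  have "X \<in> Vs" unfolding X_def by (rule act_word_Vsp[OF Cons.prems])
  then have swap: "(\<lambda>m w. act e (act e1 X) m w - act e1 (act e X) m w
      - lincomb (bterms e e1) (\<lambda>z. act z X m w)) \<in> Ns"
    by (rule actV_commutator)
  have "act e1 (\<lambda>m w. act e X m w - (act_word s (act e F) m w
      + lincomb (ad_word e s) (\<lambda>s'. act_word s' F m w))) \<in> Ns"
    by (rule actV_Nsub) (use Cons.IH[OF Cons.prems] in \<open>simp add: X_def\<close>)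
  then have IH: "(\<lambda>m w. act e1 (act e X) m w - (act e1 (act_word s (act e F)) m w
      + lincomb (ad_word e s) (\<lambda>s'. act e1 (act_word s' F) m w))) \<in> Ns"
    by (simp add: actV_diff actV_add actV_lincomb)
  show ?case
    using Nsub_add[OF swap IH] by (simp add: ad_word_Cons X_def algebra_simps del: map_map)
qed

definition vac :: "(int \<Rightarrow> complex) \<Rightarrow> vel" where
  "vac y = (\<lambda>m w. restr y m * wd [] w)"

lemma vac_Vsp: "finite {m. y m \<noteq> 0} \<Longrightarrow> vac y \<in> Vs"
proof -
  assume y: "finite {m. y m \<noteq> 0}"
  have "{m. vac y m \<noteq> (\<lambda>w. 0)} \<subseteq> {m. y m \<noteq> 0}" by (auto simp: vac_def restr_def)
  then have "finite {m. vac y m \<noteq> (\<lambda>w. 0)}" using y finite_subset by blast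
  moreover have "vac y m \<in> Tfin" for m unfolding vac_def by (rule Tfin_scale[OF Tfin_wd])
  ultimately show ?thesis by (auto simp: Vsp_def vac_def restr_def)
qed

lemma actV_vac:
  assumes "\<not> is_neg e" and y: "finite {m. y m \<noteq> 0}"
  shows "(\<lambda>m w. act e (vac y) m w - vac (\<lambda>j. chi e * y j + actA e y j) m w) \<in> Ns"
proof -
  have eq: "(\<lambda>w. act e (vac y) m w - vac (\<lambda>j. chi e * y j + actA e y j) m w)
      = (\<lambda>w. restr y m * (wd [e] w - chi e * wd [] w))" for m
  proof (rule ext)
    fix w
    have "restr (\<lambda>j. chi e * y j + actA e y j) m = chi e * restr y m + actA e y m"
      by (simp add: restr_def actA_def act_coef_def)
    then show "act e (vac y) m w - vac (\<lambda>j. chi e * y j + actA e y j) m w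
        = restr y m * (wd [e] w - chi e * wd [] w)"
      by (simp add: actV_eq vac_def tmul_scale_right tmul_wd_Nil_right actA_def)
          (simp add: algebra_simps)
  qed
  have "(\<lambda>m w. act e (vac y) m w - vac (\<lambda>j. chi e * y j + actA e y j) m w) \<in> Vs"
    by (intro Vsp_diff actV_Vsp vac_Vsp y finite_support_actA)
  then show ?thesis using Nid.scale[OF Nid_vacuum[OF assms(1)]] by (simp add: Nsub_def eq)
qed

end

lemma sum_shift_eq:
  fixes g :: "int \<Rightarrow> 'a::comm_monoid_add"
  assumes A: "finite A" and supp: "{m. g m \<noteq> 0} \<subseteq> A" "(\<lambda>m. m + s) ` {m. g m \<noteq> 0} \<subseteq> A"
  shows "(\<Sum>m\<in>A. g (m - s)) = (\<Sum>m\<in>A. g m)"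
proof -
  let ?B = "{m. g m \<noteq> 0}"
  have "(\<Sum>m\<in>A. g (m - s)) = (\<Sum>m\<in>(\<lambda>m. m + s) ` ?B. g (m - s))"
    by (rule sum.mono_neutral_right[OF A supp(2)]) (auto simp: image_iff, metis diff_add_cancel)
  also have "\<dots> = (\<Sum>m\<in>?B. g m)"
    by (subst sum.reindex) (auto simp: inj_on_def)
  also have "\<dots> = (\<Sum>m\<in>A. g m)"
    by (rule sum.mono_neutral_left[OF A supp(1)]) auto
  finally show ?thesis .
qed

section \<open>The functional \<open>\<Lambda>\<^sub>k\<close>\<close>

locale vacuum_functional = tensor_setting +
  fixes k :: int
begin

text \<open>\<open>Phi w y\<close> is the value of \<open>\<Lambda>\<^sub>k\<close> on \<open>w v \<otimes> y\<close> for a word \<open>w\<close> of \<open>T(L)\<close>.\<close>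

function Phi :: "Lb list \<Rightarrow> (int \<Rightarrow> complex) \<Rightarrow> complex" where
  "Phi [] y = y (k - 1)"
| "Phi (e # t) y = (if is_neg e then - Phi t (actA e y)
     else chi e * Phi t y + sum_list (map (\<lambda>(c,w). c * Phi w y) (ad_word e t)))"
  by pat_completeness auto
termination
  by (relation "measure (\<lambda>(t,y). length t)") (auto dest: ad_word_length)

lemma Phi_neg: "is_neg e \<Longrightarrow> Phi (e # t) y = - Phi t (actA e y)" by simp

lemma Phi_nonneg: "\<not> is_neg e \<Longrightarrow> Phi (e # t) y
    = chi e * Phi t y + lincomb (ad_word e t) (\<lambda>w. Phi w y)"
  by (simp add: lincomb_def)

declare Phi.simps(2)[simp del]

lemma Phi_lin: "Phi t (\<lambda>m. c * y m + y' m) = c * Phi t y + Phi t y'"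
proof (induction "length t" arbitrary: t y y' rule: less_induct)
  case less
  show ?case
  proof (cases t)
    case Nil then show ?thesis by simp
  next
    case (Cons e t')
    show ?thesis
    proof (cases "is_neg e")
      case True
      have "Phi t' (actA e (\<lambda>m. c * y m + y' m)) = c * Phi t' (actA e y) + Phi t' (actA e y')"
        unfolding actA_lin using less[of t'] Cons by simp
      then show ?thesis using True Cons by (simp add: Phi_neg algebra_simps)
    next
      case False
      have "lincomb (ad_word e t') (\<lambda>w. Phi w (\<lambda>m. c * y m + y' m))
          = lincomb (ad_word e t') (\<lambda>w. c * Phi w y + Phi w y')"
        by (rule lincomb_cong, rule less(1)) (auto simp: Cons dest: ad_word_length)
      then show ?thesis using False less[of t'] Cons
        by (simp add: Phi_nonneg lincomb_add lincomb_scale algebra_simps)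
    qed
  qed
qed

lemma Phi_zero[simp]: "Phi t (\<lambda>m. 0) = 0"
  using Phi_lin[of t 1 "\<lambda>m. 0" "\<lambda>m. 0"] by simp

lemma Phi_scale: "Phi t (\<lambda>m. c * y m) = c * Phi t y"
  using Phi_lin[of t c y "\<lambda>m. 0"] by simp

lemma Phi_lincomb: "Phi t (\<lambda>m. lincomb cs (\<lambda>z. Y z m)) = lincomb cs (\<lambda>z. Phi t (Y z))"
proof (induction cs)
  case (Cons p cs)
  obtain c z where "p = (c,z)" by force
  then show ?case using Cons Phi_lin[of t c "Y z" "\<lambda>m. lincomb cs (\<lambda>z. Y z m)"] by simp
qed simp

lemma Phi_snoc: "\<not> is_neg e \<Longrightarrow> Phi (u @ [e]) y = chi e * Phi u y"
proof (induction "length u" arbitrary: u e y rule: less_induct)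
  case less
  show ?case
  proof (cases u)
    case Nil then show ?thesis using less by (simp add: Phi_nonneg)
  next
    case (Cons e' u')
    show ?thesis
    proof (cases "is_neg e'")
      case True
      then show ?thesis using less(1)[of u'] less(2) Cons by (simp add: Phi_neg)
    next
      case False
      have 1: "lincomb (ad_word e' u') (\<lambda>w. Phi (w @ [e]) y)
          = chi e * lincomb (ad_word e' u') (\<lambda>w. Phi w y)"
        unfolding lincomb_scale[symmetric]
        by (rule lincomb_cong, rule less(1)) (auto simp: Cons less(2) dest: ad_word_length)
      have 2: "lincomb (bterms e' e) (\<lambda>z. Phi (u' @ [z]) y)
          = lincomb (bterms e' e) (\<lambda>z. chi z * Phi u' y)"
        by (rule lincomb_cong, rule less(1)) (auto simp: Cons dest: bterms_nonneg[OF False less(2)])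
      have 3: "lincomb (bterms e' e) (\<lambda>z. chi z * Phi u' y) = 0"
        using lincomb_scale_right[of "bterms e' e" chi "Phi u' y"]
            chi_bterms_nonneg[OF False less(2)] by simp
      show ?thesis using False Cons less(1)[of u'] less(2) 1 2 3
        by (simp add: Phi_nonneg ad_word_append ad_word_single algebra_simps del: map_map)
    qed
  qed
qed

lemma Phi_diff: "Phi t (\<lambda>m. y m - y' m) = Phi t y - Phi t y'"
  using Phi_lin[of t "-1" y' y] by simp

lemma Phi_nonneg_Cons_Cons:
  "\<not> is_neg x \<Longrightarrow> Phi (x # y # v) y0 = chi x * Phi (y # v) y0
     + lincomb (bterms x y) (\<lambda>z. Phi (z # v) y0) + lincomb (ad_word x v) (\<lambda>w. Phi (y # w) y0)"
  by (simp add: Phi_nonneg ad_word_Cons algebra_simps)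

lemma Phi_swap_head_neg_neg:
  assumes "is_neg x" "is_neg y"
  shows "Phi (x # y # v) y0 - Phi (y # x # v) y0 = lincomb (bterms x y) (\<lambda>z. Phi (z # v) y0)"
proof -
  have "lincomb (bterms x y) (\<lambda>z. Phi (z # v) y0) = lincomb (bterms x y) (\<lambda>z. - Phi v (actA z y0))"
  proof (rule lincomb_cong_weighted)
    fix c z assume "(c, z) \<in> set (bterms x y)"
    then have "is_neg z \<or> c = 0" using bterms_neg[OF assms] by blast
    then show "c * Phi (z # v) y0 = c * - Phi v (actA z y0)" by (auto simp: Phi_neg)
  qed
  also have "\<dots> = - Phi v (\<lambda>m. lincomb (bterms x y) (\<lambda>z. actA z y0 m))"
    by (simp add: lincomb_uminus Phi_lincomb)
  also have "\<dots> = - Phi v (\<lambda>m. actA x (actA y y0) m - actA y (actA x y0) m)"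
    by (simp add: actA_commutator)
  finally show ?thesis using assms by (simp add: Phi_neg Phi_diff)
qed

lemma Phi_swap_head_nonneg_neg:
  assumes "\<not> is_neg x" "is_neg y"
  shows "Phi (x # y # v) y0 - Phi (y # x # v) y0 = lincomb (bterms x y) (\<lambda>z. Phi (z # v) y0)"
proof -
  have "lincomb (ad_word x v) (\<lambda>w. Phi (y # w) y0)
      = - lincomb (ad_word x v) (\<lambda>w. Phi w (actA y y0))"
    using assms by (simp add: Phi_neg lincomb_uminus)
  moreover have "Phi (y # x # v) y0 = - (chi x * Phi v (actA y y0)
      + lincomb (ad_word x v) (\<lambda>w. Phi w (actA y y0)))"
    using assms by (simp only: Phi_neg[OF assms(2)] Phi_nonneg[OF assms(1)])
  moreover have "Phi (y # v) y0 = - Phi v (actA y y0)"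
    using assms by (simp only: Phi_neg)
  ultimately show ?thesis using Phi_nonneg_Cons_Cons[OF assms(1), of y v y0] by algebra
qed

lemma Phi_swap_head_nonneg_nonneg:
  assumes x: "\<not> is_neg x" and y: "\<not> is_neg y"
  shows "Phi (x # y # v) y0 - Phi (y # x # v) y0 = lincomb (bterms x y) (\<lambda>z. Phi (z # v) y0)"
proof -
  let ?ad = "\<lambda>z. lincomb (ad_word z v) (\<lambda>w. Phi w y0)"
  have "lincomb (bterms x y) (\<lambda>z. Phi (z # v) y0)
      = lincomb (bterms x y) (\<lambda>z. chi z * Phi v y0 + ?ad z)"
    by (rule lincomb_cong) (use bterms_nonneg[OF x y] in \<open>auto simp: Phi_nonneg\<close>)
  also have "\<dots> = lincomb (bterms x y) ?ad"
    using chi_bterms_nonneg[OF x y] by (simp add: lincomb_add lincomb_scale_right)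
  also have "\<dots> = lincomb (ad_word y v) (\<lambda>w. lincomb (ad_word x w) (\<lambda>w'. Phi w' y0))
      - lincomb (ad_word x v) (\<lambda>w. lincomb (ad_word y w) (\<lambda>w'. Phi w' y0))"
    by (rule ad_word_commutator[symmetric])
  finally have commutator: "lincomb (bterms x y) (\<lambda>z. Phi (z # v) y0) = \<dots>" .
  show ?thesis
    using Phi_nonneg_Cons_Cons[OF x, of y v y0] Phi_nonneg_Cons_Cons[OF y, of x v y0]
      Phi_nonneg[OF x, of v y0] Phi_nonneg[OF y, of v y0] commutator bterms_antisym[of y x]
    by (simp add: Phi_nonneg[OF x] Phi_nonneg[OF y] lincomb_add lincomb_scale algebra_simps)
qed

lemma Phi_swap_head: "Phi (x # y # v) y0 - Phi (y # x # v) y0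
    = lincomb (bterms x y) (\<lambda>z. Phi (z # v) y0)"
proof (cases "is_neg x"; cases "is_neg y")
  assume "is_neg x" "\<not> is_neg y"
  then have "Phi (y # x # v) y0 - Phi (x # y # v) y0 = lincomb (bterms y x) (\<lambda>z. Phi (z # v) y0)"
    by (rule Phi_swap_head_nonneg_neg[rotated])
  then show ?thesis using bterms_antisym[of y x "\<lambda>z. Phi (z # v) y0"] by algebra
qed (simp_all add: Phi_swap_head_neg_neg Phi_swap_head_nonneg_neg Phi_swap_head_nonneg_nonneg)

lemma Phi_nonneg_expand_at:
  "\<not> is_neg e \<Longrightarrow> Phi (e # u @ z # v) y0 = chi e * Phi (u @ z # v) y0
     + lincomb (ad_word e u) (\<lambda>w. Phi (w @ z # v) y0)
         + lincomb (bterms e z) (\<lambda>z'. Phi (u @ z' # v) y0)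
     + lincomb (ad_word e v) (\<lambda>w. Phi (u @ z # w) y0)"
  by (simp add: Phi_nonneg ad_word_append ad_word_Cons algebra_simps del: map_map)

lemma Phi_nonneg_expand_at2:
  "\<not> is_neg e \<Longrightarrow> Phi (e # u @ x # y # v) y0 = chi e * Phi (u @ x # y # v) y0
     + lincomb (ad_word e u) (\<lambda>w. Phi (w @ x # y # v) y0)
         + lincomb (bterms e x) (\<lambda>z. Phi (u @ z # y # v) y0)
     + lincomb (bterms e y) (\<lambda>z. Phi (u @ x # z # v) y0)
         + lincomb (ad_word e v) (\<lambda>w. Phi (u @ x # y # w) y0)"
  by (simp add: Phi_nonneg ad_word_append ad_word_Cons algebra_simps del: map_map)

lemma Phi_swap_Cons_nonneg:
  assumes e: "\<not> is_neg e"
    and IH: "\<And>w x y v y0. length w = length u \<Longrightarrow>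
      Phi (w @ x # y # v) y0 - Phi (w @ y # x # v) y0
          = lincomb (bterms x y) (\<lambda>z. Phi (w @ z # v) y0)"
  shows "Phi (e # u @ x # y # v) y0 - Phi (e # u @ y # x # v) y0
    = lincomb (bterms x y) (\<lambda>z. Phi (e # u @ z # v) y0)"
proof -
  let ?P = "\<lambda>z'. Phi (u @ z' # v) y0"
  have A: "Phi (u @ x # y # v) y0 - Phi (u @ y # x # v) y0 = lincomb (bterms x y) ?P"
    by (rule IH) simp
  have B: "lincomb (ad_word e u) (\<lambda>w. Phi (w @ x # y # v) y0)
      - lincomb (ad_word e u) (\<lambda>w. Phi (w @ y # x # v) y0)
      = lincomb (bterms x y) (\<lambda>z. lincomb (ad_word e u) (\<lambda>w. Phi (w @ z # v) y0))"
    unfolding lincomb_diff[symmetric] lincomb_swap[of "bterms x y"]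
    by (rule lincomb_cong, rule IH) (auto dest: ad_word_length)
  have C: "lincomb (ad_word e v) (\<lambda>w. Phi (u @ x # y # w) y0)
      - lincomb (ad_word e v) (\<lambda>w. Phi (u @ y # x # w) y0)
      = lincomb (bterms x y) (\<lambda>z. lincomb (ad_word e v) (\<lambda>w. Phi (u @ z # w) y0))"
    unfolding lincomb_diff[symmetric] lincomb_swap[of "bterms x y"] by (simp add: IH)
  have D1: "lincomb (bterms e x) (\<lambda>z. Phi (u @ z # y # v) y0)
      - lincomb (bterms e x) (\<lambda>z. Phi (u @ y # z # v) y0)
      = lincomb (bterms e x) (\<lambda>z. lincomb (bterms z y) ?P)"
    unfolding lincomb_diff[symmetric] by (simp add: IH)
  have D2: "lincomb (bterms e y) (\<lambda>z. Phi (u @ x # z # v) y0)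
      - lincomb (bterms e y) (\<lambda>z. Phi (u @ z # x # v) y0)
      = lincomb (bterms e y) (\<lambda>z. lincomb (bterms x z) ?P)"
    unfolding lincomb_diff[symmetric] by (simp add: IH)
  have J: "lincomb (bterms x y) (\<lambda>z. lincomb (bterms e z) ?P)
      - lincomb (bterms e y) (\<lambda>z. lincomb (bterms x z) ?P)
      = lincomb (bterms e x) (\<lambda>z. lincomb (bterms z y) ?P)"
    by (rule bterms_jacobi)
  have R: "lincomb (bterms x y) (\<lambda>z. Phi (e # u @ z # v) y0) = chi e * lincomb (bterms x y) ?P
      + lincomb (bterms x y) (\<lambda>z. lincomb (ad_word e u) (\<lambda>w. Phi (w @ z # v) y0))
      + lincomb (bterms x y) (\<lambda>z. lincomb (bterms e z) ?P)
      + lincomb (bterms x y) (\<lambda>z. lincomb (ad_word e v) (\<lambda>w. Phi (u @ z # w) y0))"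
    by (simp only: Phi_nonneg_expand_at[OF e] lincomb_add lincomb_scale)
  show ?thesis
    using Phi_nonneg_expand_at2[OF e, of u x y v y0] Phi_nonneg_expand_at2[OF e, of u y x v y0] R
      A[unfolded diff_eq_eq] B[unfolded diff_eq_eq] C[unfolded diff_eq_eq] D1[unfolded diff_eq_eq]
      D2[unfolded diff_eq_eq] J[unfolded diff_eq_eq]
    by (simp add: algebra_simps)
qed

lemma Phi_swap:
  "Phi (u @ x # y # v) y0 - Phi (u @ y # x # v) y0 = lincomb (bterms x y) (\<lambda>z. Phi (u @ z # v) y0)"
proof (induction "length u" arbitrary: u x y v y0 rule: less_induct)
  case less
  show ?case
  proof (cases u)
    case Nil
    then show ?thesis using Phi_swap_head by simp
  next
    case (Cons e u')
    show ?thesis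
    proof (cases "is_neg e")
      case True
      have "Phi (e # u' @ x # y # v) y0 - Phi (e # u' @ y # x # v) y0
          = - (Phi (u' @ x # y # v) (actA e y0) - Phi (u' @ y # x # v) (actA e y0))"
        using True by (simp add: Phi_neg)
      also have "\<dots> = - lincomb (bterms x y) (\<lambda>z. Phi (u' @ z # v) (actA e y0))"
        using less Cons by simp
      also have "\<dots> = lincomb (bterms x y) (\<lambda>z. Phi (e # u' @ z # v) y0)"
        using True by (simp add: Phi_neg lincomb_uminus)
      finally show ?thesis using Cons by simp
    next
      case False
      then show ?thesis using Phi_swap_Cons_nonneg[of e u'] less Cons by simp
    qed
  qed
qed


lemma tpair_Phi_Nid: "t \<in> Ni \<Longrightarrow> tpair t (\<lambda>w. Phi w y0) = 0"
proof (induction rule: Nid.induct)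
  case (add s t)
  then show ?case by (simp add: tpair_add Nid_Tfin)
next
  case (scale s c)
  then show ?case by (simp add: tpair_scale)
next
  case (rel u x y v)
  have T: "(\<lambda>w. wd [x, y] w - wd [y, x] w) \<in> Tfin"
    "(\<lambda>w. lincomb (bterms x y) (\<lambda>z. wd [z] w)) \<in> Tfin"
    by (intro Tfin_diff Tfin_wd Tfin_lincomb)+
  have "tpair (tmul (tmul (wd u) (relT x y)) (wd v)) (\<lambda>w. Phi w y0)
      = tpair (relT x y) (\<lambda>w. Phi ((u @ w) @ v) y0)"
    by (simp add: tpair_tmul_wd_left tpair_tmul_wd_right)
  also have "\<dots> = Phi (u @ x # y # v) y0 - Phi (u @ y # x # v) y0
      - lincomb (bterms x y) (\<lambda>z. Phi (u @ z # v) y0)"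
    unfolding relT_eq_lincomb tpair_diff[OF T] tpair_diff[OF Tfin_wd Tfin_wd]
        tpair_lincomb[OF Tfin_wd] tpair_wd
    by simp
  also have "\<dots> = 0" using Phi_swap[of u x y v y0] by simp
  finally show ?case .
next
  case (gen g u)
  have "tpair g (\<lambda>w. Phi (u @ w) y0) = 0"
    using gen
    by (auto simp: gens_def tpair_wd tpair_diff[OF Tfin_wd Tfin_scale[OF Tfin_wd]] tpair_scale
        Phi_snoc)
  then show ?case by (simp add: tpair_tmul_wd_left)
qed (simp add: tpair_def)

definition Lambda :: "vel \<Rightarrow> complex" where
  "Lambda F = (\<Sum>m\<in>{m. F m \<noteq> (\<lambda>w. 0)}. tpair (F m) (\<lambda>w. Phi w (delta m)))"

lemma Lambda_superset:
  "finite A \<Longrightarrow> {m. F m \<noteq> (\<lambda>w. 0)} \<subseteq> A \<Longrightarrow>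
    Lambda F = (\<Sum>m\<in>A. tpair (F m) (\<lambda>w. Phi w (delta m)))"
  unfolding Lambda_def by (rule sum.mono_neutral_left) (auto simp: tpair_def)

lemma Lambda_comb:
  "F \<in> Vs \<Longrightarrow> G \<in> Vs \<Longrightarrow> Lambda (\<lambda>m w. c * F m w + G m w) = c * Lambda F + Lambda G"
proof -
  assume F: "F \<in> Vs" and G: "G \<in> Vs"
  let ?A = "{m. F m \<noteq> (\<lambda>w. 0)} \<union> {m. G m \<noteq> (\<lambda>w. 0)}"
  have A: "finite ?A" using Vsp_finite[OF F] Vsp_finite[OF G] by simp
  have "Lambda (\<lambda>m w. c * F m w + G m w)
      = (\<Sum>m\<in>?A. tpair (\<lambda>w. c * F m w + G m w) (\<lambda>w. Phi w (delta m)))"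
    by (rule Lambda_superset[OF A]) auto
  also have "\<dots> = (\<Sum>m\<in>?A. c * tpair (F m) (\<lambda>w. Phi w (delta m))
      + tpair (G m) (\<lambda>w. Phi w (delta m)))"
    by (rule sum.cong)
      (simp_all add: tpair_add[OF Tfin_scale[OF Vsp_Tfin[OF F]] Vsp_Tfin[OF G]] tpair_scale)
  also have "\<dots> = c * Lambda F + Lambda G"
    by (simp add: sum.distrib sum_distrib_left Lambda_superset[OF A])
  finally show ?thesis .
qed

lemma Lambda_zero: "Lambda (\<lambda>m w. 0) = 0"
  by (simp add: Lambda_def)

lemma Lambda_add: "F \<in> Vs \<Longrightarrow> G \<in> Vs \<Longrightarrow> Lambda (\<lambda>m w. F m w + G m w) = Lambda F + Lambda G"
  using Lambda_comb[of F G 1] by simp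

lemma Lambda_scale: "F \<in> Vs \<Longrightarrow> Lambda (\<lambda>m w. c * F m w) = c * Lambda F"
  using Lambda_comb[of F "\<lambda>m w. 0" c] Vsp_zero Lambda_zero by simp

lemma Lambda_lincomb:
  "(\<And>z. G z \<in> Vs) \<Longrightarrow> Lambda (\<lambda>m w. lincomb cs (\<lambda>z. G z m w)) = lincomb cs (\<lambda>z. Lambda (G z))"
proof (induction cs)
  case (Cons p cs)
  obtain c z where p: "p = (c,z)" by force
  show ?case using Lambda_comb[OF Cons.prems[of z] Vsp_lincomb[OF Cons.prems], of c cs] Cons
    by (simp add: p)
qed (simp add: Lambda_zero)

lemma Lambda_Nsub: "F \<in> Ns \<Longrightarrow> Lambda F = 0"
  unfolding Lambda_def by (rule sum.neutral) (simp add: tpair_Phi_Nid Nsub_Nid)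

lemma Lambda_cong_Nsub:
  "F \<in> Vs \<Longrightarrow> G \<in> Vs \<Longrightarrow> (\<lambda>m w. F m w - G m w) \<in> Ns \<Longrightarrow> Lambda F = Lambda G"
  using Lambda_comb[of G F "-1"] Lambda_Nsub[of "\<lambda>m w. F m w - G m w"] by simp

lemma Lambda_vac: "finite {m. y m \<noteq> 0} \<Longrightarrow> Lambda (vac y) = restr y (k - 1)"
proof -
  assume y: "finite {m. y m \<noteq> 0}"
  let ?A = "insert (k - 1) {m. y m \<noteq> 0}"
  have "Lambda (vac y) = (\<Sum>m\<in>?A. tpair (vac y m) (\<lambda>w. Phi w (delta m)))"
    by (rule Lambda_superset) (use y in \<open>auto simp: vac_def restr_def\<close>)
  also have "\<dots> = (\<Sum>m\<in>?A. if m = k - 1 then restr y m else 0)"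
    by (rule sum.cong) (auto simp: vac_def tpair_scale tpair_wd delta_def)
  also have "\<dots> = restr y (k - 1)" using y by simp
  finally show ?thesis .
qed

lemma tpair_actV_neg:
  assumes "is_neg e" "F \<in> Vs"
  defines "g \<equiv> \<lambda>j. act_coef e (j + mode e) * tpair (F j) (\<lambda>w. Phi w (delta (j + mode e)))"
  shows "tpair (act e F m) (\<lambda>w. Phi w (delta m)) = g (m - mode e) - g m"
proof -
  have "tpair (act e F m) (\<lambda>w. Phi w (delta m))
      = tpair (tmul (wd [e]) (F m)) (\<lambda>w. Phi w (delta m))
        + act_coef e m * tpair (F (m - mode e)) (\<lambda>w. Phi w (delta m))"
    unfolding actV_eq
    by (simp add: tpair_scale
        tpair_add[OF Tfin_tmul_wd_left[OF Vsp_Tfin[OF assms(2)]] Tfin_scale[OF Vsp_Tfin[OF assms(2)]]])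
  also have "tpair (tmul (wd [e]) (F m)) (\<lambda>w. Phi w (delta m)) = - g m"
  proof (cases "m \<in> Sset a b Fp")
    case True
    then show ?thesis
      using assms(1) tpair_scale_fun[of "F m" "- act_coef e (m + mode e)"]
      by (simp add: g_def tpair_tmul_wd_left Phi_neg actA_delta Phi_scale)
  qed (simp add: g_def Vsp_outside[OF assms(2)] tpair_def tmul_def)
  finally show ?thesis by (simp add: g_def)
qed

lemma Lambda_actV_neg: "is_neg e \<Longrightarrow> F \<in> Vs \<Longrightarrow> Lambda (act e F) = 0"
proof -
  assume e: "is_neg e" and F: "F \<in> Vs"
  define g where "g \<equiv> \<lambda>j. act_coef e (j + mode e) * tpair (F j) (\<lambda>w. Phi w (delta (j + mode e)))"
  define B where "B = {m. F m \<noteq> (\<lambda>w. 0)}"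
  define A where "A = B \<union> (\<lambda>j. j + mode e) ` B"
  have A: "finite A" using Vsp_finite[OF F] by (simp add: A_def B_def)
  have gB: "{m. g m \<noteq> 0} \<subseteq> B" by (auto simp: g_def B_def tpair_def)
  have "Lambda (act e F) = (\<Sum>m\<in>A. tpair (act e F m) (\<lambda>w. Phi w (delta m)))"
    by (rule Lambda_superset[OF A]) (use actV_support[of e F] in \<open>simp add: A_def B_def\<close>)
  also have "\<dots> = (\<Sum>m\<in>A. g (m - mode e)) - (\<Sum>m\<in>A. g m)"
    by (simp add: tpair_actV_neg[OF e F] g_def sum_subtractf)
  also have "\<dots> = 0"
    using sum_shift_eq[OF A, of g "mode e"] gB by (auto simp: A_def)
  finally show ?thesis .
qed

lemma Lambda_act_word_nonneg_vac:
  assumes e: "\<not> is_neg e" and y: "finite {m. y m \<noteq> 0}"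
  shows "Lambda (act_word (e # s) (vac y))
    = Lambda (act_word s (vac (\<lambda>j. chi e * y j + actA e y j)))
      + lincomb (ad_word e s) (\<lambda>s'. Lambda (act_word s' (vac y)))"
proof -
  have v: "vac y \<in> Vs" by (rule vac_Vsp[OF y])
  have "Lambda (act e (act_word s (vac y)))
      = Lambda (\<lambda>m w. act_word s (act e (vac y)) m w
          + lincomb (ad_word e s) (\<lambda>s'. act_word s' (vac y) m w))"
    by (rule Lambda_cong_Nsub[OF _ _ act_word_commutator[OF v]])
      (intro Vsp_add Vsp_lincomb actV_Vsp act_word_Vsp v)+
  also have "\<dots> = Lambda (act_word s (act e (vac y)))
      + lincomb (ad_word e s) (\<lambda>s'. Lambda (act_word s' (vac y)))"
    using Lambda_add[OF act_word_Vsp[OF actV_Vsp[OF v]] Vsp_lincomb[OF act_word_Vsp[OF v]],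
        of s e "ad_word e s" "\<lambda>s'. s'"]
      Lambda_lincomb[OF act_word_Vsp[OF v], of "ad_word e s" "\<lambda>s'. s'"]
    by simp
  also have "Lambda (act_word s (act e (vac y)))
      = Lambda (act_word s (vac (\<lambda>j. chi e * y j + actA e y j)))"
    using act_word_Nsub[OF actV_vac[OF e y], of s]
    by (intro Lambda_cong_Nsub act_word_Vsp actV_Vsp vac_Vsp y finite_support_actA)
      (simp_all add: act_word_diff)
  finally show ?thesis by simp
qed

lemma Lambda_vanish:
  "finite {m. y m \<noteq> 0} \<Longrightarrow> (\<forall>j<k. y j = 0) \<Longrightarrow> Lambda (act_word s (vac y)) = 0"
proof (induction "length s" arbitrary: s y rule: less_induct)
  case less
  note y = less.prems(1) and low = less.prems(2)
  show ?case
  proof (cases s)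
    case Nil
    then show ?thesis using low by (simp add: Lambda_vac[OF y] restr_def)
  next
    case (Cons e s')
    show ?thesis
    proof (cases "is_neg e")
      case True
      then show ?thesis using Cons Lambda_actV_neg act_word_Vsp[OF vac_Vsp[OF y]] by simp
    next
      case False
      then have "mode e \<ge> 0" by (cases e) auto
      then have "\<forall>j<k. chi e * y j + actA e y j = 0"
        using low by (simp add: actA_def restr_def)
      then have "Lambda (act_word s' (vac (\<lambda>j. chi e * y j + actA e y j))) = 0"
        using less(1)[OF _ finite_support_actA[OF y]] Cons by simp
      moreover have "lincomb (ad_word e s') (\<lambda>s''. Lambda (act_word s'' (vac y))) = 0"
        using lincomb_cong[of "ad_word e s'" _ "\<lambda>_. 0"] less(1)[OF _ y low] Cons
        by (simp add: ad_word_length)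
      ultimately show ?thesis
        using Cons Lambda_act_word_nonneg_vac[OF False y] by simp
    qed
  qed
qed

lemma Lambda_act_word_qcl_some:
  "F \<in> Vs \<Longrightarrow> Lambda (act_word s (SOME x. x \<in> cls F)) = Lambda (act_word s F)"
proof -
  assume F: "F \<in> Vs"
  note rep = qcl_some[OF F]
  show ?thesis
    using act_word_Nsub[OF rep[THEN conjunct2], of s] rep
    by (intro Lambda_cong_Nsub act_word_Vsp F) (simp_all add: act_word_diff)
qed

subsection \<open>The largest submodule inside \<open>ker \<Lambda>\<^sub>k\<close>\<close>

definition ann :: "vel set set" where
  "ann = {X \<in> Wcar I0 d0 z1 z2 z3 a b Fp. \<forall>s. Lambda (act_word s (SOME x. x \<in> X)) = 0}"

lemma qcl_in_ann: "G \<in> Vs \<Longrightarrow> (\<And>s. Lambda (act_word s G) = 0) \<Longrightarrow> cls G \<in> ann"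
  by (auto simp: ann_def Wcar_def Lambda_act_word_qcl_some)

lemma ann_some:
  "X \<in> ann \<Longrightarrow> (SOME x. x \<in> X) \<in> Vs \<and> (\<forall>s. Lambda (act_word s (SOME x. x \<in> X)) = 0)"
  using qcl_some by (auto simp: ann_def Wcar_def)

lemma submod_ann:
  "submod (Wcar I0 d0 z1 z2 z3 a b Fp) (Wzero I0 d0 z1 z2 z3 a b Fp)
     (Wadd I0 d0 z1 z2 z3 a b Fp) (Wscale I0 d0 z1 z2 z3 a b Fp) (Wact I0 d0 z1 z2 z3 a b Fp) ann"
  unfolding submod_def
proof (intro conjI ballI allI)
  show "ann \<subseteq> Wcar I0 d0 z1 z2 z3 a b Fp"
    by (auto simp: ann_def)
  show "Wzero I0 d0 z1 z2 z3 a b Fp \<in> ann"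
    unfolding Wzero_def by (rule qcl_in_ann) (simp_all add: Vsp_zero act_word_zero Lambda_zero)
next
  fix X Y assume "X \<in> ann" "Y \<in> ann"
  then show "Wadd I0 d0 z1 z2 z3 a b Fp X Y \<in> ann"
    unfolding Wadd_def using ann_some[of X] ann_some[of Y]
    by (intro qcl_in_ann) (simp_all add: Vsp_add act_word_add Lambda_add act_word_Vsp)
next
  fix c X assume "X \<in> ann"
  then show "Wscale I0 d0 z1 z2 z3 a b Fp c X \<in> ann"
    unfolding Wscale_def using ann_some[of X]
    by (intro qcl_in_ann) (simp_all add: Vsp_scale act_word_scale Lambda_scale act_word_Vsp)
next
  fix e X assume "X \<in> ann"
  then show "Wact I0 d0 z1 z2 z3 a b Fp e X \<in> ann"
    unfolding Wact_def using ann_some[of X]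
    by (intro qcl_in_ann) (simp_all add: actV_Vsp act_word_snoc[symmetric])
qed

lemma finite_support_delta: "finite {j. delta m j \<noteq> 0}"
  by (simp add: delta_def)

lemma vac_delta_in_ann: "cls (vac (delta k)) \<in> ann"
  by (rule qcl_in_ann[OF vac_Vsp[OF finite_support_delta] Lambda_vanish[OF finite_support_delta]])
    (simp add: delta_def)

lemma Lambda_vac_delta:
  "m \<in> Sset a b Fp \<Longrightarrow> Lambda (vac (delta m)) = (if m = k - 1 then 1 else 0)"
  by (simp add: Lambda_vac[OF finite_support_delta]) (auto simp: restr_def delta_def)

lemma vac_delta_notin_ann:
  assumes "k - 1 \<in> Sset a b Fp"
  shows "cls (vac (delta (k - 1))) \<in> Wcar I0 d0 z1 z2 z3 a b Fp - ann"
proof -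
  have v: "vac (delta (k - 1)) \<in> Vs" by (rule vac_Vsp[OF finite_support_delta])
  have "Lambda (act_word [] (SOME x. x \<in> cls (vac (delta (k - 1))))) = 1"
    by (simp add: Lambda_act_word_qcl_some[OF v, of "[]", simplified] Lambda_vac_delta[OF assms])
  then show ?thesis using v by (auto simp: ann_def Wcar_def intro!: exI[of _ "[]"])
qed

lemma vac_delta_nonzero:
  assumes "k - 1 \<in> Sset a b Fp"
  shows "cls (vac (delta (k - 1))) \<noteq> Wzero I0 d0 z1 z2 z3 a b Fp"
proof
  have "vac (delta (k - 1)) \<in> cls (vac (delta (k - 1)))"
    by (rule qcl_self[OF vac_Vsp[OF finite_support_delta]])
  also assume "cls (vac (delta (k - 1))) = Wzero I0 d0 z1 z2 z3 a b Fp"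
  finally have "Lambda (vac (delta (k - 1))) = 0"
    using Lambda_Nsub by (simp add: Wzero_def qcl_def)
  then show False by (simp add: Lambda_vac_delta[OF assms])
qed

end

theorem lemma17:
  fixes I0 d0 z1 z2 z3 a b F :: complex
  shows "\<not> simple_mod (Wcar I0 d0 z1 z2 z3 a b F) (Wzero I0 d0 z1 z2 z3 a b F)
            (Wadd I0 d0 z1 z2 z3 a b F) (Wscale I0 d0 z1 z2 z3 a b F)
            (Wact I0 d0 z1 z2 z3 a b F)"
proof
  assume simple: "simple_mod (Wcar I0 d0 z1 z2 z3 a b F) (Wzero I0 d0 z1 z2 z3 a b F)
            (Wadd I0 d0 z1 z2 z3 a b F) (Wscale I0 d0 z1 z2 z3 a b F)
            (Wact I0 d0 z1 z2 z3 a b F)"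
  obtain k where k: "k \<in> Sset a b F" "k - 1 \<in> Sset a b F"
    using Sset_consecutive by blast
  interpret \<Lambda>: vacuum_functional I0 d0 z1 z2 z3 a b F k .
  interpret \<Lambda>': vacuum_functional I0 d0 z1 z2 z3 a b F "k + 1" .
  have "\<Lambda>.ann = {Wzero I0 d0 z1 z2 z3 a b F} \<or> \<Lambda>.ann = Wcar I0 d0 z1 z2 z3 a b F"
    using simple \<Lambda>.submod_ann by (simp add: simple_mod_def)
  moreover have "\<Lambda>.cls (\<Lambda>.vac (delta k)) \<noteq> Wzero I0 d0 z1 z2 z3 a b F"
    using \<Lambda>'.vac_delta_nonzero k(1) by simp
  ultimately show False
    using \<Lambda>.vac_delta_in_ann \<Lambda>.vac_delta_notin_ann[OF k(2)] by blast
qed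

end
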